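(* Let $n$ be even, $\alpha$ a character of $F^*$, and $\pi$ a representation of $G_n$. Then $\pi$ is $(H_n,\chi_\alpha)$-distinguished if and only if it is $(H_n,\chi_\alpha^{-1})$-distinguished.
   Context: $F$ non-archimedean local field; $G_n=GL(n,F)$; $\epsilon_n=diag(1,-1,1,\dots)$, $H_n=\{g:\epsilon_ng\epsilon_n=g\}\simeq G_{n/2}\times G_{n/2}$, elements $h(g_1,g_2)$ with $g_1$ on odd-indexed and $g_2$ on even-indexed basis vectors; $\chi_\alpha(h(g_1,g_2))=\alpha(\det g_1/\det g_2)$. $\pi$ is $(H_n,\chi)$-distinguished if $Hom_{H_n}(\pi,\chi)\ne0$. *)

theory Defs
  imports Complex_Main "Jordan_Normal_Form.Determinant"
begin

text \<open>A non-archimedean local field, given by an absolute value av on a field: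
  multiplicative, ultrametric, discrete (with a uniformizer), finite residue field, complete.\<close>
definition nonarch_local_field :: "('F::field \<Rightarrow> real) \<Rightarrow> bool" where
  "nonarch_local_field av \<longleftrightarrow>
     (\<forall>x. av x \<ge> 0) \<and> (\<forall>x. av x = 0 \<longleftrightarrow> x = 0) \<and>
     (\<forall>x y. av (x * y) = av x * av y) \<and>
     (\<forall>x y. av (x + y) \<le> max (av x) (av y)) \<and>
     (\<exists>w. 0 < av w \<and> av w < 1 \<and> (\<forall>x. av x < 1 \<longrightarrow> av x \<le> av w)) \<and>
     (\<exists>R. finite R \<and> (\<forall>x. av x \<le> 1 \<longrightarrow> (\<exists>r\<in>R. av (x - r) < 1))) \<and>
     (\<forall>X::nat \<Rightarrow> 'F. (\<forall>e>0. \<exists>N. \<forall>m\<ge>N. \<forall>k\<ge>N. av (X m - X k) < e) \<longrightarrow>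
        (\<exists>L. \<forall>e>0. \<exists>N. \<forall>m\<ge>N. av (X m - L) < e))"

text \<open>G_n = GL(n,F), matrices indexed 0..n-1 (index i here is basis vector i+1 of the paper).\<close>
definition GL :: "nat \<Rightarrow> 'F::field mat set" where
  "GL n = {g \<in> carrier_mat n n. det g \<noteq> 0}"

text \<open>h(g1,g2): g1 acts on the odd-indexed (paper) basis vectors = even 0-based indices,
  g2 on the even-indexed (paper) = odd 0-based indices. H_n is the set of these.\<close>
definition hmat :: "nat \<Rightarrow> 'F::field mat \<Rightarrow> 'F mat \<Rightarrow> 'F mat" where
  "hmat n g1 g2 = mat n n (\<lambda>(i,j).
      if even i \<and> even j then g1 $$ (i div 2, j div 2)
      else if odd i \<and> odd j then g2 $$ (i div 2, j div 2) else 0)"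

definition Hn :: "nat \<Rightarrow> 'F::field mat set" where
  "Hn n = {hmat n g1 g2 | g1 g2. g1 \<in> GL (n div 2) \<and> g2 \<in> GL (n div 2)}"

definition character :: "('F::field \<Rightarrow> real) \<Rightarrow> ('F \<Rightarrow> complex) \<Rightarrow> bool" where
  "character av \<alpha> \<longleftrightarrow>
     (\<forall>x. x \<noteq> 0 \<longrightarrow> \<alpha> x \<noteq> 0) \<and>
     (\<forall>x y. x \<noteq> 0 \<longrightarrow> y \<noteq> 0 \<longrightarrow> \<alpha> (x * y) = \<alpha> x * \<alpha> y) \<and>
     (\<forall>e>0. \<exists>d>0. \<forall>x. x \<noteq> 0 \<longrightarrow> av (x - 1) < d \<longrightarrow> cmod (\<alpha> x - 1) < e)"

definition smooth_rep :: "('F::field \<Rightarrow> real) \<Rightarrow> nat \<Rightarrow> (complex \<Rightarrow> 'v::ab_group_add \<Rightarrow> 'v)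
    \<Rightarrow> ('F mat \<Rightarrow> 'v \<Rightarrow> 'v) \<Rightarrow> bool" where
  "smooth_rep av n scale \<pi> \<longleftrightarrow>
     Vector_Spaces.vector_space scale \<and>
     (\<forall>g\<in>GL n. Vector_Spaces.linear scale scale (\<pi> g) \<and> bij (\<pi> g)) \<and>
     \<pi> (1\<^sub>m n) = id \<and>
     (\<forall>g\<in>GL n. \<forall>h\<in>GL n. \<pi> (g * h) = \<pi> g \<circ> \<pi> h) \<and>
     (\<forall>v. \<exists>e>0. \<forall>g\<in>GL n. (\<forall>i<n. \<forall>j<n. av (g $$ (i,j) - (1\<^sub>m n) $$ (i,j)) < e)
          \<longrightarrow> \<pi> g v = v)"

definition chi :: "('F::field \<Rightarrow> complex) \<Rightarrow> 'F mat \<Rightarrow> 'F mat \<Rightarrow> complex" where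
  "chi \<alpha> g1 g2 = \<alpha> (det g1 / det g2)"

definition chi_inv :: "('F::field \<Rightarrow> complex) \<Rightarrow> 'F mat \<Rightarrow> 'F mat \<Rightarrow> complex" where
  "chi_inv \<alpha> g1 g2 = inverse (chi \<alpha> g1 g2)"

definition distinguished :: "(complex \<Rightarrow> 'v::ab_group_add \<Rightarrow> 'v) \<Rightarrow> ('F::field mat \<Rightarrow> 'v \<Rightarrow> 'v) \<Rightarrow> nat
    \<Rightarrow> ('F mat \<Rightarrow> 'F mat \<Rightarrow> complex) \<Rightarrow> bool" where
  "distinguished scale \<pi> n \<chi> \<longleftrightarrow>
     (\<exists>l. Vector_Spaces.linear scale ((*) :: complex \<Rightarrow> complex \<Rightarrow> complex) l \<and> l \<noteq> (\<lambda>_. 0) \<and>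
        (\<forall>g1\<in>GL (n div 2). \<forall>g2\<in>GL (n div 2). \<forall>v.
            l (\<pi> (hmat n g1 g2) v) = \<chi> g1 g2 * l v))"

end

theory Submission
  imports Defs
begin

text \<open>The permutation matrix \<open>w\<close> exchanging the basis vectors \<open>2k\<close> and \<open>2k+1\<close> lies in \<open>GL(n,F)\<close>
  and satisfies \<open>w h(g\<^sub>1,g\<^sub>2) = h(g\<^sub>2,g\<^sub>1) w\<close>. Hence if \<open>\<ell>\<close> is an \<open>(H\<^sub>n,\<chi>)\<close>-equivariant functional,
  \<open>\<ell> \<circ> \<pi>(w)\<close> is equivariant for the character \<open>h(g\<^sub>1,g\<^sub>2) \<mapsto> \<chi>(h(g\<^sub>2,g\<^sub>1))\<close>, and
  \<open>\<chi>\<^sub>\<alpha>(h(g\<^sub>2,g\<^sub>1)) = \<chi>\<^sub>\<alpha>\<^sup>-\<^sup>1(h(g\<^sub>1,g\<^sub>2))\<close>.\<close>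

lemma sum_even_odd_split:
  fixes f :: "nat \<Rightarrow> 'a::comm_monoid_add"
  shows "(\<Sum>k<2 * m. f k) = (\<Sum>k<m. f (2 * k) + f (2 * k + 1))"
  by (induction m) (simp_all add: add.assoc)

lemma GL_right_inverse:
  assumes "g \<in> GL m"
  obtains g' where "g' \<in> carrier_mat m m" "g * g' = 1\<^sub>m m"
proof -
  from assms have "g \<in> carrier_mat m m" and "det g \<noteq> 0" by (auto simp: GL_def)
  from det_non_zero_imp_unit[OF this, of "()"] show thesis
    using that by (auto simp: Units_def ring_mat_def)
qed

lemma GL_if_mult_eq_one:
  assumes "g \<in> carrier_mat n n" "g' \<in> carrier_mat n n" "g * g' = 1\<^sub>m n"
  shows "g \<in> GL n"
proof -
  have "det g * det g' = 1"
    using det_mult[OF assms(1,2)] assms(3) by simp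
  with assms(1) show ?thesis by (auto simp: GL_def)
qed

lemma hmat_carrier [simp]: "hmat n a b \<in> carrier_mat n n"
  by (simp add: hmat_def)

lemma mult_hmat:
  assumes n: "n = 2 * m"
    and carrier: "a \<in> carrier_mat m m" "b \<in> carrier_mat m m" "c \<in> carrier_mat m m" "d \<in> carrier_mat m m"
  shows "hmat n a b * hmat n c d = hmat n (a * c) (b * d)"
proof (rule eq_matI)
  fix i j assume "i < dim_row (hmat n (a * c) (b * d))" "j < dim_col (hmat n (a * c) (b * d))"
  then have i: "i < n" and j: "j < n" by (auto simp: hmat_def)
  have "(hmat n a b * hmat n c d) $$ (i, j) = (\<Sum>k<2 * m. hmat n a b $$ (i, k) * hmat n c d $$ (k, j))"
    using i j n by (simp add: scalar_prod_def hmat_def atLeast0LessThan)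
  also have "\<dots> = (\<Sum>k<m. hmat n a b $$ (i, 2 * k) * hmat n c d $$ (2 * k, j)
                        + hmat n a b $$ (i, 2 * k + 1) * hmat n c d $$ (2 * k + 1, j))"
    by (rule sum_even_odd_split)
  also have "\<dots> = (\<Sum>k<m.
      (if even i \<and> even j then a $$ (i div 2, k) * c $$ (k, j div 2) else 0) +
      (if odd i \<and> odd j then b $$ (i div 2, k) * d $$ (k, j div 2) else 0))"
    using i j n by (intro sum.cong) (auto simp: hmat_def)
  also have "\<dots> = hmat n (a * c) (b * d) $$ (i, j)"
    using i j n carrier by (auto simp: hmat_def scalar_prod_def atLeast0LessThan)
  finally show "(hmat n a b * hmat n c d) $$ (i, j) = hmat n (a * c) (b * d) $$ (i, j)" .
qed (auto simp: hmat_def)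

lemma hmat_one: "n = 2 * m \<Longrightarrow> hmat n (1\<^sub>m m) (1\<^sub>m m) = (1\<^sub>m n :: 'a::field mat)"
  by (intro eq_matI) (auto simp: hmat_def, presburger+)

lemma hmat_in_GL:
  assumes n: "n = 2 * m" and "g1 \<in> GL m" "g2 \<in> GL m"
  shows "hmat n g1 g2 \<in> GL n"
proof -
  obtain h1 where h1: "h1 \<in> carrier_mat m m" "g1 * h1 = 1\<^sub>m m"
    using GL_right_inverse[OF \<open>g1 \<in> GL m\<close>] .
  obtain h2 where h2: "h2 \<in> carrier_mat m m" "g2 * h2 = 1\<^sub>m m"
    using GL_right_inverse[OF \<open>g2 \<in> GL m\<close>] .
  have "hmat n g1 g2 * hmat n h1 h2 = 1\<^sub>m n"
    using mult_hmat[OF n _ _ h1(1) h2(1), of g1 g2] assms h1 h2 hmat_one[OF n]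
    by (auto simp: GL_def)
  then show ?thesis
    by (intro GL_if_mult_eq_one[of _ _ "hmat n h1 h2"]) simp_all
qed

definition pair_swap :: "nat \<Rightarrow> nat" where
  "pair_swap i = (if even i then i + 1 else i - 1)"

lemma pair_swap_less: "even n \<Longrightarrow> i < n \<Longrightarrow> pair_swap i < n"
  unfolding pair_swap_def by (auto elim!: evenE oddE)

lemma pair_swap_pair_swap [simp]: "pair_swap (pair_swap i) = i"
  unfolding pair_swap_def by auto

lemma eq_pair_swap_iff: "j = pair_swap k \<longleftrightarrow> k = pair_swap j"
  by (metis pair_swap_pair_swap)

lemma even_pair_swap [simp]: "even (pair_swap i) \<longleftrightarrow> odd i"
  unfolding pair_swap_def by (cases i) auto

lemma pair_swap_div_2 [simp]: "pair_swap i div 2 = i div 2"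
  unfolding pair_swap_def by (auto elim!: evenE oddE)

definition swap_mat :: "nat \<Rightarrow> 'a::field mat" where
  "swap_mat n = mat n n (\<lambda>(i, j). if j = pair_swap i then 1 else 0)"

lemma swap_mat_carrier [simp]: "swap_mat n \<in> carrier_mat n n"
  by (simp add: swap_mat_def)

lemma swap_mat_mult_index:
  assumes n: "even n" and A: "A \<in> carrier_mat n n" and i: "i < n" and j: "j < n"
  shows "(swap_mat n * A) $$ (i, j) = A $$ (pair_swap i, j)"
proof -
  have "(swap_mat n * A) $$ (i, j) = (\<Sum>k\<in>{0..<n}. (if k = pair_swap i then 1 else 0) * A $$ (k, j))"
    using A i j by (simp add: scalar_prod_def swap_mat_def eq_pair_swap_iff)
  also have "\<dots> = A $$ (pair_swap i, j)"
    using pair_swap_less[OF n i]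
    by (subst sum.cong[OF refl, of _ _ "\<lambda>k. if k = pair_swap i then A $$ (k, j) else 0"]) auto
  finally show ?thesis .
qed

lemma mult_swap_mat_index:
  assumes n: "even n" and A: "A \<in> carrier_mat n n" and i: "i < n" and j: "j < n"
  shows "(A * swap_mat n) $$ (i, j) = A $$ (i, pair_swap j)"
proof -
  have "(A * swap_mat n) $$ (i, j) = (\<Sum>k\<in>{0..<n}. A $$ (i, k) * (if k = pair_swap j then 1 else 0))"
    using A i j by (simp add: scalar_prod_def swap_mat_def eq_pair_swap_iff)
  also have "\<dots> = A $$ (i, pair_swap j)"
    using pair_swap_less[OF n j]
    by (subst sum.cong[OF refl, of _ _ "\<lambda>k. if k = pair_swap j then A $$ (i, k) else 0"]) auto
  finally show ?thesis .
qed

lemma swap_mat_mult_swap_mat: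
  assumes n: "even n"
  shows "swap_mat n * swap_mat n = (1\<^sub>m n :: 'a::field mat)"
proof (rule eq_matI)
  fix i j assume "i < dim_row (1\<^sub>m n :: 'a mat)" "j < dim_col (1\<^sub>m n :: 'a mat)"
  then have i: "i < n" and j: "j < n" by auto
  show "(swap_mat n * swap_mat n) $$ (i, j) = (1\<^sub>m n :: 'a mat) $$ (i, j)"
    using mult_swap_mat_index[OF n swap_mat_carrier i j] i j pair_swap_less[OF n j]
    by (auto simp: swap_mat_def eq_pair_swap_iff)
qed (auto simp: swap_mat_def)

lemma swap_mat_in_GL: "even n \<Longrightarrow> (swap_mat n :: 'a::field mat) \<in> GL n"
  by (rule GL_if_mult_eq_one[OF _ _ swap_mat_mult_swap_mat]) simp_all

lemma swap_mat_mult_hmat: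
  assumes n: "even n"
  shows "swap_mat n * hmat n a b = hmat n b a * (swap_mat n :: 'a::field mat)"
proof (rule eq_matI)
  fix i j assume "i < dim_row (hmat n b a * (swap_mat n :: 'a mat))"
    "j < dim_col (hmat n b a * (swap_mat n :: 'a mat))"
  then have i: "i < n" and j: "j < n" by (auto simp: hmat_def swap_mat_def)
  have "(swap_mat n * hmat n a b) $$ (i, j) = hmat n a b $$ (pair_swap i, j)"
    using swap_mat_mult_index[OF n hmat_carrier i j] .
  also have "\<dots> = hmat n b a $$ (i, pair_swap j)"
    using pair_swap_less[OF n i] pair_swap_less[OF n j] i j by (auto simp: hmat_def)
  also have "\<dots> = (hmat n b a * swap_mat n) $$ (i, j)"
    using mult_swap_mat_index[OF n hmat_carrier i j] by (rule sym)
  finally show "(swap_mat n * hmat n a b) $$ (i, j) = (hmat n b a * swap_mat n) $$ (i, j)" .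
qed (auto simp: hmat_def swap_mat_def)

lemma distinguished_swap:
  fixes \<pi> :: "'a::field mat \<Rightarrow> 'v::ab_group_add \<Rightarrow> 'v"
  assumes n: "even n" and rep: "smooth_rep av n scale \<pi>"
    and "distinguished scale \<pi> n \<chi>"
  shows "distinguished scale \<pi> n (\<lambda>g1 g2. \<chi> g2 g1)"
proof -
  obtain l where lin: "Vector_Spaces.linear scale ((*) :: complex \<Rightarrow> complex \<Rightarrow> complex) l"
    and nz: "l \<noteq> (\<lambda>_. 0)"
    and equiv: "\<forall>g1\<in>GL (n div 2). \<forall>g2\<in>GL (n div 2). \<forall>v. l (\<pi> (hmat n g1 g2) v) = \<chi> g1 g2 * l v"
    using assms(3) unfolding distinguished_def by blast
  define w :: "'a mat" where "w = swap_mat n"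
  have w: "w \<in> GL n" using swap_mat_in_GL[OF n] by (simp add: w_def)
  have V: "Vector_Spaces.vector_space scale"
    and \<pi>w: "Vector_Spaces.linear scale scale (\<pi> w)" "bij (\<pi> w)"
    and \<pi>_mult: "\<And>g h. g \<in> GL n \<Longrightarrow> h \<in> GL n \<Longrightarrow> \<pi> (g * h) = \<pi> g \<circ> \<pi> h"
    using rep w unfolding smooth_rep_def by auto
  obtain m where m: "n = 2 * m" using n by blast
  have "Vector_Spaces.linear scale ((*) :: complex \<Rightarrow> complex \<Rightarrow> complex) (l \<circ> \<pi> w)"
    using V lin \<pi>w(1) by (intro Vector_Spaces.linear_compose) auto
  moreover have "l \<circ> \<pi> w \<noteq> (\<lambda>_. 0)"
  proof
    assume "l \<circ> \<pi> w = (\<lambda>_. 0)"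
    then have "l = (\<lambda>_. 0)"
      using \<pi>w(2) by (metis bij_pointE comp_apply)
    with nz show False ..
  qed
  moreover have "(l \<circ> \<pi> w) (\<pi> (hmat n g1 g2) v) = \<chi> g2 g1 * (l \<circ> \<pi> w) v"
    if g1: "g1 \<in> GL (n div 2)" and g2: "g2 \<in> GL (n div 2)" for g1 g2 v
  proof -
    have "hmat n g1 g2 \<in> GL n" "hmat n g2 g1 \<in> GL n"
      using hmat_in_GL[OF m] g1 g2 m by auto
    then have "\<pi> w (\<pi> (hmat n g1 g2) v) = \<pi> (hmat n g2 g1) (\<pi> w v)"
      using \<pi>_mult[OF w] \<pi>_mult[OF _ w] swap_mat_mult_hmat[OF n]
      by (metis comp_apply w_def)
    then show ?thesis
      using equiv g1 g2 by simp
  qed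
  ultimately show ?thesis unfolding distinguished_def by blast
qed

lemma distinguished_cong:
  assumes "\<And>g1 g2. g1 \<in> GL (n div 2) \<Longrightarrow> g2 \<in> GL (n div 2) \<Longrightarrow> \<chi> g1 g2 = \<chi>' g1 g2"
  shows "distinguished scale \<pi> n \<chi> \<longleftrightarrow> distinguished scale \<pi> n \<chi>'"
  using assms unfolding distinguished_def by simp

lemma character_inverse:
  assumes "character av \<alpha>" and x: "x \<noteq> 0"
  shows "\<alpha> (inverse x) = inverse (\<alpha> x)"
proof -
  have mult: "\<And>x y. x \<noteq> 0 \<Longrightarrow> y \<noteq> 0 \<Longrightarrow> \<alpha> (x * y) = \<alpha> x * \<alpha> y"
    and nonzero: "\<And>x. x \<noteq> 0 \<Longrightarrow> \<alpha> x \<noteq> 0"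
    using assms(1) unfolding character_def by auto
  have "\<alpha> 1 = 1"
    using mult[of 1 1] nonzero[of 1] by simp
  then have "\<alpha> x * \<alpha> (inverse x) = 1"
    using mult[of x "inverse x"] x by simp
  then show ?thesis by (metis inverse_unique)
qed

lemma chi_swap:
  assumes "character av \<alpha>" and "g1 \<in> GL m" "g2 \<in> GL m"
  shows "chi \<alpha> g2 g1 = chi_inv \<alpha> g1 g2"
proof -
  have "det g1 \<noteq> 0" "det g2 \<noteq> 0" using assms(2,3) by (auto simp: GL_def)
  then show ?thesis
    using character_inverse[OF assms(1), of "det g1 / det g2"]
    by (simp add: chi_def chi_inv_def)
qed

lemma chi_inv_swap:
  assumes "character av \<alpha>" and "g1 \<in> GL m" "g2 \<in> GL m"
  shows "chi_inv \<alpha> g2 g1 = chi \<alpha> g1 g2"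
  using chi_swap[OF assms(1,3,2)] by (simp add: chi_inv_def)

theorem mainTheorem8:
  fixes av :: "'F::field \<Rightarrow> real" and \<alpha> :: "'F \<Rightarrow> complex"
    and scale :: "complex \<Rightarrow> 'v::ab_group_add \<Rightarrow> 'v" and \<pi> :: "'F mat \<Rightarrow> 'v \<Rightarrow> 'v" and n :: nat
  assumes "nonarch_local_field av" and "even n" and "character av \<alpha>"
    and "smooth_rep av n scale \<pi>"
  shows "distinguished scale \<pi> n (chi \<alpha>) \<longleftrightarrow> distinguished scale \<pi> n (chi_inv \<alpha>)"
proof
  assume "distinguished scale \<pi> n (chi \<alpha>)"
  then have "distinguished scale \<pi> n (\<lambda>g1 g2. chi \<alpha> g2 g1)"
    using assms(2,4) distinguished_swap by blast
  then show "distinguished scale \<pi> n (chi_inv \<alpha>)"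
    using distinguished_cong[of n "\<lambda>g1 g2. chi \<alpha> g2 g1" "chi_inv \<alpha>"] chi_swap[OF assms(3)]
    by blast
next
  assume "distinguished scale \<pi> n (chi_inv \<alpha>)"
  then have "distinguished scale \<pi> n (\<lambda>g1 g2. chi_inv \<alpha> g2 g1)"
    using assms(2,4) distinguished_swap by blast
  then show "distinguished scale \<pi> n (chi \<alpha>)"
    using distinguished_cong[of n "\<lambda>g1 g2. chi_inv \<alpha> g2 g1" "chi \<alpha>"] chi_inv_swap[OF assms(3)]
    by blast
qed

end
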